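(* Let $p\ge 2$ be an integer. For all $\mathbf r=(r_1,r_2)\in\mathbb Z^2$, \[ {\rm coeff}_{\left[\zeta_1^{r_1},\,\zeta_{2}^{r_2}\right]} F(\zeta_1,\zeta_2;q)=\mathbb{G}_{\mathbf{r}}(\tau). \]
   Context: $q:=e^{2\pi i\tau}$, $\tau\in\mathbb H$. $Q(\mathbf n):=n_1^2+n_2^2-n_1n_2$; $\mathbb N=\{1,2,3,\dots\}$. \begin{align*} F(\zeta_1,\zeta_2;q)&:=\sum_{n_1,n_2\in\mathbb Z}\frac{q^{pQ\left(n_1-\frac1p,\,n_2-\frac1p\right)}}{\left(1-\zeta_1^{-1}\right)\left(1-\zeta_2^{-1}\right)\left(1-\zeta_1^{-1}\zeta_2^{-1}\right)}\Big(\zeta_1^{n_1-1} \zeta_2^{n_2-1} -\zeta_1^{-n_1+n_2-1}\zeta_2^{n_2-1}\\ &\qquad-\zeta_1^{n_1-1}\zeta_2^{-n_2+n_1-1}+\zeta_1^{-n_2-1} \zeta_2^{-n_2+n_1-1}+\zeta_1^{-n_1+n_2-1} \zeta_2^{-n_1-1}-\zeta_1^{-n_2-1}\zeta_2^{-n_1-1}\Big), \end{align*} where each summand is a Laurent polynomial in $\zeta_1,\zeta_2$, and ${\rm coeff}_{[\zeta_1^{r_1},\zeta_2^{r_2}]}$ is the coefficient of $\zeta_1^{r_1}\zeta_2^{r_2}$. For $\boldsymbol\lambda\in\mathbb Q^2$, \begin{multline*} \mathbb{G}_{\boldsymbol{\lambda}}(\tau):=\sum_{\mathbf{n} \in \mathbb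 N^2} {\rm min}(n_1,n_2)\,q^{p Q\left(\mathbf n+\boldsymbol{\lambda}- \left(\frac1p, \frac1p\right)\right)} \Big(1-q^{2\left(n_1+\lambda_1\right)-\left(n_2+\lambda_2\right)}-q^{2\left(n_2+\lambda_2\right)-\left(n_1+\lambda_1\right)}\\+q^{3\left(n_1+\lambda_1\right)}+q^{3\left(n_2+\lambda_2\right)}-q^{2\left(n_1+\lambda_1\right)+2\left(n_2+\lambda_2\right)}\Big). \end{multline*} *)

theory Defs
  imports "HOL-Analysis.Analysis"
begin

text \<open>Fractional powers of the nome: \<open>q^x := e^{2 \<pi> i \<tau> x}\<close> for real \<open>x\<close>.\<close>
definition qpow :: "complex \<Rightarrow> real \<Rightarrow> complex" where
  "qpow \<tau> x = exp (2 * of_real pi * \<i> * \<tau> * of_real x)"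

definition Qf :: "real \<Rightarrow> real \<Rightarrow> real" where
  "Qf x y = x^2 + y^2 - x * y"

text \<open>Laurent polynomials in \<open>\<zeta>1, \<zeta>2\<close> with integer coefficients are represented by
  finitely supported coefficient functions \<open>int \<times> int \<Rightarrow> int\<close>
  (the value at \<open>(a,b)\<close> is the coefficient of \<open>\<zeta>1^a \<zeta>2^b\<close>).\<close>
definition laurent :: "(int \<times> int \<Rightarrow> int) \<Rightarrow> bool" where
  "laurent L \<longleftrightarrow> finite {k. L k \<noteq> 0}"

text \<open>Multiplication by \<open>(1 - \<zeta>1^{-1})\<close>, \<open>(1 - \<zeta>2^{-1})\<close>, \<open>(1 - \<zeta>1^{-1}\<zeta>2^{-1})\<close>.\<close>
definition mul1 :: "(int \<times> int \<Rightarrow> int) \<Rightarrow> int \<times> int \<Rightarrow> int" where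
  "mul1 L = (\<lambda>(a,b). L (a,b) - L (a+1,b))"
definition mul2 :: "(int \<times> int \<Rightarrow> int) \<Rightarrow> int \<times> int \<Rightarrow> int" where
  "mul2 L = (\<lambda>(a,b). L (a,b) - L (a,b+1))"
definition mul12 :: "(int \<times> int \<Rightarrow> int) \<Rightarrow> int \<times> int \<Rightarrow> int" where
  "mul12 L = (\<lambda>(a,b). L (a,b) - L (a+1,b+1))"

definition mul_den :: "(int \<times> int \<Rightarrow> int) \<Rightarrow> int \<times> int \<Rightarrow> int" where
  "mul_den L = mul1 (mul2 (mul12 L))"

definition monom2 :: "int \<times> int \<Rightarrow> int \<times> int \<Rightarrow> int" where
  "monom2 e = (\<lambda>k. if k = e then 1 else 0)"

definition numF :: "int \<times> int \<Rightarrow> int \<times> int \<Rightarrow> int" where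
  "numF n = (let n1 = fst n; n2 = snd n in
     (\<lambda>k. monom2 (n1 - 1, n2 - 1) k
        - monom2 (-n1 + n2 - 1, n2 - 1) k
        - monom2 (n1 - 1, -n2 + n1 - 1) k
        + monom2 (-n2 - 1, -n2 + n1 - 1) k
        + monom2 (-n1 + n2 - 1, -n1 - 1) k
        - monom2 (-n2 - 1, -n1 - 1) k))"

definition summandF :: "int \<times> int \<Rightarrow> int \<times> int \<Rightarrow> int" where
  "summandF n = (THE L. laurent L \<and> mul_den L = numF n)"

definition coeffF :: "int \<Rightarrow> complex \<Rightarrow> int \<times> int \<Rightarrow> complex" where
  "coeffF p \<tau> r = (\<Sum>\<^sub>\<infinity>n\<in>(UNIV :: (int \<times> int) set).
      qpow \<tau> (of_int p * Qf (of_int (fst n) - 1 / of_int p) (of_int (snd n) - 1 / of_int p))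
      * of_int (summandF n r))"

definition GG :: "int \<Rightarrow> real \<times> real \<Rightarrow> complex \<Rightarrow> complex" where
  "GG p lam \<tau> = (\<Sum>\<^sub>\<infinity>n\<in>{n :: int \<times> int. fst n \<ge> 1 \<and> snd n \<ge> 1}.
      (let x = of_int (fst n) + fst lam; y = of_int (snd n) + snd lam in
        of_int (min (fst n) (snd n))
        * qpow \<tau> (of_int p * Qf (x - 1 / of_int p) (y - 1 / of_int p))
        * (1 - qpow \<tau> (2 * x - y) - qpow \<tau> (2 * y - x)
             + qpow \<tau> (3 * x) + qpow \<tau> (3 * y) - qpow \<tau> (2 * x + 2 * y))))"

end

theory Submission
  imports Defs
begin

(* With x = zeta1^-1 and y = zeta2^-1, the inverse of the denominator (1 - x)(1 - y)(1 - x y)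
   has coefficient min(a, b) + 1 at x^a y^b, and the numerator of the summand of F is the
   alternating sum of zeta^(w n - (1,1)) over the Weyl group W of A2.  Hence the summand is an
   explicit Laurent polynomial (the alternating sum cancels outside a box), and the coefficient
   of zeta^r in F splits into six sums, the one for w being, after substituting n = w^-1 (m + r),
   the sum over m in N^2 of min(m1, m2) q^(p Q(w^-1 (m + r) - 1/p)).  As W preserves Q, the
   weight q^(p Q(w^-1 v - 1/p)) is q^(p Q(v - 1/p)) times q^(v1 + v2 - (w^-1 v)1 - (w^-1 v)2),
   and the alternating sum of these six factors is the bracket in G.  All series converge
   absolutely because the weight decays like a Gaussian, so the finite alternating sum may be
   exchanged with the infinite ones. *)

definition shift_diff :: "int \<times> int \<Rightarrow> (int \<times> int \<Rightarrow> int) \<Rightarrow> int \<times> int \<Rightarrow> int" where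
  "shift_diff d L = (\<lambda>k. L k - L (k + d))"

lemma mul1_eq_shift_diff: "mul1 = shift_diff (1, 0)"
  and mul2_eq_shift_diff: "mul2 = shift_diff (0, 1)"
  and mul12_eq_shift_diff: "mul12 = shift_diff (1, 1)"
  by (auto simp: fun_eq_iff mul1_def mul2_def mul12_def shift_diff_def)

lemma mul_den_eq_shift_diff: "mul_den = shift_diff (1, 0) \<circ> shift_diff (0, 1) \<circ> shift_diff (1, 1)"
  by (simp add: fun_eq_iff mul_den_def mul1_eq_shift_diff mul2_eq_shift_diff mul12_eq_shift_diff)

lemma shift_diff_diff:
  "shift_diff d (\<lambda>k. L k - M k) = (\<lambda>k. shift_diff d L k - shift_diff d M k)"
  by (simp add: shift_diff_def fun_eq_iff)

lemma shift_diff_sum: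
  "shift_diff d (\<lambda>k. \<Sum>i\<in>I. c i * f i k) = (\<lambda>k. \<Sum>i\<in>I. c i * shift_diff d (f i) k)"
  by (simp add: shift_diff_def fun_eq_iff sum_subtractf right_diff_distrib)

lemma mul_den_sum:
  "mul_den (\<lambda>k. \<Sum>i\<in>I. c i * f i k) = (\<lambda>k. \<Sum>i\<in>I. c i * mul_den (f i) k)"
  by (simp add: mul_den_eq_shift_diff shift_diff_sum)

lemma laurent_diff: "laurent L \<Longrightarrow> laurent M \<Longrightarrow> laurent (\<lambda>k. L k - M k)"
  unfolding laurent_def by (rule finite_subset[of _ "{k. L k \<noteq> 0} \<union> {k. M k \<noteq> 0}"]) auto

lemma laurent_shift: "laurent (\<lambda>k. L (k + d))" if "laurent L"
proof -
  have "{k. L (k + d) \<noteq> 0} = (\<lambda>k. k + d) -` {k. L k \<noteq> 0}" by auto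
  moreover have "inj (\<lambda>k. k + d)" by (simp add: inj_def)
  ultimately show ?thesis
    using that unfolding laurent_def by (metis finite_vimageI)
qed

lemma laurent_shift_diff: "laurent L \<Longrightarrow> laurent (shift_diff d L)"
  unfolding shift_diff_def by (intro laurent_diff laurent_shift)

lemma laurent_shift_invariant_eq_0:
  assumes "laurent L" and "d \<noteq> 0" and periodic: "\<And>k. L (k + d) = L k"
  shows "L = (\<lambda>_. 0)"
proof
  fix k
  let ?orbit = "\<lambda>j::nat. k + (of_nat j * fst d, of_nat j * snd d)"
  have orbit: "L (?orbit j) = L k" for j
  proof (induction j)
    case (Suc j)
    have "?orbit (Suc j) = ?orbit j + d" by (simp add: prod_eq_iff algebra_simps)
    then show ?case using Suc periodic by metis
  qed (simp add: zero_prod_def[symmetric])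
  have "inj ?orbit"
    using \<open>d \<noteq> 0\<close> by (auto intro!: injI simp: prod_eq_iff)
  show "L k = 0"
  proof (rule ccontr)
    assume "L k \<noteq> 0"
    with orbit have "range ?orbit \<subseteq> {k. L k \<noteq> 0}" by auto
    then have "finite (range ?orbit)"
      using \<open>laurent L\<close> finite_subset unfolding laurent_def by blast
    with \<open>inj ?orbit\<close> show False
      using finite_imageD infinite_UNIV_nat by blast
  qed
qed

lemma laurent_shift_diff_eq_0:
  assumes "laurent L" and "d \<noteq> 0" and "shift_diff d L = (\<lambda>_. 0)"
  shows "L = (\<lambda>_. 0)"
proof (rule laurent_shift_invariant_eq_0[OF assms(1,2)])
  fix k
  show "L (k + d) = L k"
    using fun_cong[OF assms(3), of k] by (simp add: shift_diff_def)
qed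

lemma laurent_mul_den_inj:
  assumes "laurent L" and "laurent M" and "mul_den L = mul_den M"
  shows "L = M"
proof -
  define D where "D = (\<lambda>k. L k - M k)"
  have D: "laurent D"
    using assms(1,2) by (simp add: D_def laurent_diff)
  have "shift_diff (1, 0) (shift_diff (0, 1) (shift_diff (1, 1) D)) = (\<lambda>_. 0)"
    using assms(3) by (simp add: D_def mul_den_eq_shift_diff shift_diff_diff fun_eq_iff)
  then have "shift_diff (0, 1) (shift_diff (1, 1) D) = (\<lambda>_. 0)"
    by (rule laurent_shift_diff_eq_0[rotated 2]) (simp_all add: D laurent_shift_diff zero_prod_def)
  then have "shift_diff (1, 1) D = (\<lambda>_. 0)"
    by (rule laurent_shift_diff_eq_0[rotated 2]) (simp_all add: D laurent_shift_diff zero_prod_def)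
  then have "D = (\<lambda>_. 0)"
    by (rule laurent_shift_diff_eq_0[rotated 2]) (simp_all add: D zero_prod_def)
  then show ?thesis
    by (simp add: D_def fun_eq_iff)
qed

(* inv_den a b is the coefficient of x^a y^b in 1/((1 - x)(1 - y)(1 - x y)), the sum of
   x^(i + k) y^(j + k) over i, j, k >= 0; monom_div_den e is zeta^e divided by the
   denominator, expanded in this way. *)
definition inv_den :: "int \<Rightarrow> int \<Rightarrow> int" where
  "inv_den a b = (if 0 \<le> a \<and> 0 \<le> b then min a b + 1 else 0)"

lemma inv_den_eq_0: "a < 0 \<or> b < 0 \<Longrightarrow> inv_den a b = 0"
  and inv_den_of_le: "0 \<le> a \<Longrightarrow> b \<le> a \<Longrightarrow> inv_den a b = (if 0 \<le> b then b + 1 else 0)"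
  and inv_den_of_ge: "0 \<le> b \<Longrightarrow> a \<le> b \<Longrightarrow> inv_den a b = (if 0 \<le> a then a + 1 else 0)"
  and inv_den_of_nonneg: "0 \<le> a \<Longrightarrow> 0 \<le> b \<Longrightarrow> inv_den a b = min a b + 1"
  by (auto simp: inv_den_def min_def)

definition monom_div_den :: "int \<times> int \<Rightarrow> int \<times> int \<Rightarrow> int" where
  "monom_div_den e k = inv_den (fst e - fst k) (snd e - snd k)"

lemma mul_den_monom_div_den: "mul_den (monom_div_den e) = monom2 e"
proof
  fix k :: "int \<times> int"
  obtain u v where e: "e = k + (u, v)"
    by (metis add_diff_cancel_left' diff_add_cancel prod.collapse)
  have "inv_den u v - inv_den (u - 1) v - inv_den u (v - 1) + inv_den (u - 2) (v - 1)
      + inv_den (u - 1) (v - 2) - inv_den (u - 2) (v - 2) = (if u = 0 \<and> v = 0 then 1 else 0)"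
    by (auto simp: inv_den_def min_def)
  then show "mul_den (monom_div_den e) k = monom2 e k"
    by (cases k) (auto simp: e mul_den_eq_shift_diff shift_diff_def monom_div_den_def monom2_def algebra_simps)
qed

(* The Weyl group of A2: S1 and S2 are the simple reflections and W0 = S1 S2 S1 is the longest
   element; weyl_act is its action on the summation index of F, and weyl_sign the sign
   character. *)
datatype weyl = One | S1 | S2 | S1S2 | S2S1 | W0

lemma UNIV_weyl: "(UNIV :: weyl set) = {One, S1, S2, S1S2, S2S1, W0}"
  using weyl.exhaust by auto

instance weyl :: finite
  by standard (simp add: UNIV_weyl)

fun weyl_act :: "weyl \<Rightarrow> int \<times> int \<Rightarrow> int \<times> int" where
  "weyl_act One (a, b) = (a, b)"
| "weyl_act S1 (a, b) = (b - a, b)"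
| "weyl_act S2 (a, b) = (a, a - b)"
| "weyl_act S1S2 (a, b) = (- b, a - b)"
| "weyl_act S2S1 (a, b) = (b - a, - a)"
| "weyl_act W0 (a, b) = (- b, - a)"

fun weyl_sign :: "weyl \<Rightarrow> int" where
  "weyl_sign One = 1"
| "weyl_sign S1 = -1"
| "weyl_sign S2 = -1"
| "weyl_sign S1S2 = 1"
| "weyl_sign S2S1 = 1"
| "weyl_sign W0 = -1"

fun weyl_inv :: "weyl \<Rightarrow> weyl" where
  "weyl_inv S1S2 = S2S1"
| "weyl_inv S2S1 = S1S2"
| "weyl_inv w = w"

lemma weyl_inv_inv: "weyl_inv (weyl_inv w) = w"
  by (cases w) simp_all

lemma weyl_act_inv_act: "weyl_act (weyl_inv w) (weyl_act w v) = v"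
  by (cases v; cases w) simp_all

lemma weyl_act_act_inv: "weyl_act w (weyl_act (weyl_inv w) v) = v"
  using weyl_act_inv_act[of "weyl_inv w"] by (simp add: weyl_inv_inv)

lemma Qf_weyl_act:
  "Qf (of_int (fst (weyl_act w v))) (of_int (snd (weyl_act w v))) = Qf (of_int (fst v)) (of_int (snd v))"
  by (cases v; cases w) (simp_all add: Qf_def power2_eq_square algebra_simps)

lemma weyl_act_abs_le:
  "\<bar>fst (weyl_act w v)\<bar> + \<bar>snd (weyl_act w v)\<bar> \<le> 2 * (\<bar>fst v\<bar> + \<bar>snd v\<bar>)"
  by (cases v; cases w) auto

lemma numF_eq_weyl_sum:
  "numF n = (\<lambda>k. \<Sum>w\<in>UNIV. weyl_sign w * monom2 (weyl_act w n - (1, 1)) k)"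
  by (cases n) (simp add: fun_eq_iff numF_def UNIV_weyl algebra_simps)

definition weyl_summand :: "int \<times> int \<Rightarrow> int \<times> int \<Rightarrow> int" where
  "weyl_summand n = (\<lambda>k. \<Sum>w\<in>UNIV. weyl_sign w * monom_div_den (weyl_act w n - (1, 1)) k)"

lemma mul_den_weyl_summand: "mul_den (weyl_summand n) = numF n"
  by (simp add: weyl_summand_def mul_den_sum mul_den_monom_div_den numF_eq_weyl_sum)

lemma weyl_summand_eq:
  "weyl_summand (a, b) (x, y) =
     inv_den (a - 1 - x) (b - 1 - y) - inv_den (b - a - 1 - x) (b - 1 - y)
   - inv_den (a - 1 - x) (a - b - 1 - y) + inv_den (- b - 1 - x) (a - b - 1 - y)
   + inv_den (b - a - 1 - x) (- a - 1 - y) - inv_den (- b - 1 - x) (- a - 1 - y)"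
  by (simp add: weyl_summand_def UNIV_weyl monom_div_den_def algebra_simps)

lemma weyl_summand_eq_0:
  assumes "2 * (\<bar>a\<bar> + \<bar>b\<bar>) + 1 < \<bar>x\<bar> \<or> 2 * (\<bar>a\<bar> + \<bar>b\<bar>) + 1 < \<bar>y\<bar>"
  shows "weyl_summand (a, b) (x, y) = 0"
proof -
  define B where "B = \<bar>a\<bar> + \<bar>b\<bar>"
  have B: "0 \<le> B" "a \<le> B" "- a \<le> B" "b \<le> B" "- b \<le> B" "a - b \<le> B" "b - a \<le> B"
    unfolding B_def by arith+
  have "2 * B + 1 < \<bar>x\<bar> \<or> 2 * B + 1 < \<bar>y\<bar>"
    using assms by (simp add: B_def)
  then have "B \<le> x \<or> B \<le> y \<or> (x < - B \<and> B \<le> y - x) \<or> (y < - B \<and> B \<le> x - y) \<or> (x < - B \<and> y < - B)"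
    using \<open>0 \<le> B\<close> by arith
  then consider "B \<le> x" | "B \<le> y" | "x < - B" "B \<le> y - x" | "y < - B" "B \<le> x - y"
    | "x < - B" "y < - B"
    by blast
  then show ?thesis
  proof cases
    case 1 then show ?thesis using B by (simp add: weyl_summand_eq inv_den_eq_0)
  next
    case 2 then show ?thesis using B by (simp add: weyl_summand_eq inv_den_eq_0)
  next
    case 3 then show ?thesis using B by (simp add: weyl_summand_eq inv_den_of_le)
  next
    case 4 then show ?thesis using B by (simp add: weyl_summand_eq inv_den_of_ge)
  next
    case 5 then show ?thesis using B by (simp add: weyl_summand_eq inv_den_of_nonneg min_def)
  qed
qed

lemma laurent_weyl_summand: "laurent (weyl_summand n)"
proof -
  obtain a b where n: "n = (a, b)" by (cases n)
  define M where "M = 2 * (\<bar>a\<bar> + \<bar>b\<bar>) + 1"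
  have "{k. weyl_summand n k \<noteq> 0} \<subseteq> {-M..M} \<times> {-M..M}"
  proof clarify
    fix x y assume "weyl_summand n (x, y) \<noteq> 0"
    then have "\<bar>x\<bar> \<le> M \<and> \<bar>y\<bar> \<le> M"
      using weyl_summand_eq_0[of a b x y] unfolding n M_def by linarith
    then show "x \<in> {-M..M} \<and> y \<in> {-M..M}" by auto
  qed
  then show ?thesis
    unfolding laurent_def by (rule finite_subset) simp
qed

lemma summandF_eq_weyl_summand: "summandF n = weyl_summand n"
  unfolding summandF_def
proof (rule the_equality)
  show "laurent (weyl_summand n) \<and> mul_den (weyl_summand n) = numF n"
    by (simp add: laurent_weyl_summand mul_den_weyl_summand)
  show "L = weyl_summand n" if "laurent L \<and> mul_den L = numF n" for L
    using that by (auto intro: laurent_mul_den_inj[OF _ laurent_weyl_summand] simp: mul_den_weyl_summand)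
qed

lemma has_sum_sum:
  fixes f :: "'i \<Rightarrow> 'a \<Rightarrow> 'b::topological_comm_monoid_add"
  assumes "finite I" and "\<And>i. i \<in> I \<Longrightarrow> (f i has_sum s i) A"
  shows "((\<lambda>x. \<Sum>i\<in>I. f i x) has_sum (\<Sum>i\<in>I. s i)) A"
  using assms by (induction I rule: finite_induct) (auto intro: has_sum_add)

lemma summable_on_Times_nonneg:
  fixes f g :: "_ \<Rightarrow> real"
  assumes "f summable_on A" and "g summable_on B"
    and "\<And>x. x \<in> A \<Longrightarrow> 0 \<le> f x" and "\<And>y. y \<in> B \<Longrightarrow> 0 \<le> g y"
  shows "(\<lambda>(x, y). f x * g y) summable_on A \<times> B"
proof (rule summable_on_SigmaI)
  show "((\<lambda>y. case (x, y) of (x, y) \<Rightarrow> f x * g y) has_sum f x * infsum g B) B" for x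
    using has_sum_cmult_right[OF assms(2)[unfolded summable_iff_has_sum_infsum]] by simp
  show "(\<lambda>x. f x * infsum g B) summable_on A"
    using assms(1) by (rule summable_on_cmult_left)
qed (use assms in auto)

lemma summable_on_of_int_mult_exp:
  fixes c :: real
  assumes "0 < c"
  shows "(\<lambda>k::int. of_int k * exp (- c * of_int k)) summable_on {1..}"
proof -
  define z where "z = exp (- c)"
  have "0 < z" "z < 1"
    using assms by (simp_all add: z_def)
  then have "summable (\<lambda>n. z * (of_nat (Suc n) * z ^ n))"
    using geometric_deriv_sums[of z] by (intro summable_mult sums_summable) auto
  then have "(\<lambda>n. z * (of_nat (Suc n) * z ^ n)) summable_on UNIV"
    using \<open>0 < z\<close> by (subst summable_on_UNIV_nonneg_real_iff) auto
  moreover have "z * (of_nat (Suc (nat (k - 1))) * z ^ nat (k - 1)) = of_int k * exp (- c * of_int k)"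
    if "1 \<le> k" for k
  proof -
    have k: "real_of_int k = of_nat (Suc (nat (k - 1)))"
      using that by simp
    have "exp (- c * of_int k) = z ^ Suc (nat (k - 1))"
      unfolding z_def exp_of_nat_mult[symmetric] k by (simp only: mult.commute)
    then show ?thesis
      unfolding k by (simp only: power_Suc mult.commute mult.left_commute)
  qed
  ultimately show ?thesis
    by (subst summable_on_reindex_bij_witness[where j = "\<lambda>k. nat (k - 1)" and i = "\<lambda>n. int n + 1"
          and T = UNIV and h = "\<lambda>n. z * (of_nat (Suc n) * z ^ n)"]) auto
qed

lemma qpow_add: "qpow \<tau> a * qpow \<tau> b = qpow \<tau> (a + b)"
  by (simp add: qpow_def exp_add[symmetric] algebra_simps)

lemma norm_qpow: "norm (qpow \<tau> x) = exp (- 2 * pi * Im \<tau> * x)"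
  by (simp add: qpow_def norm_exp_eq_Re)

lemma Qf_shift:
  fixes P X Y :: real
  assumes "P \<noteq> 0"
  shows "P * Qf (X - 1 / P) (Y - 1 / P) = P * Qf X Y - X - Y + 1 / P"
  using assms by (simp add: Qf_def field_simps power2_eq_square)

lemma Qf_shift_lower_bound:
  fixes P X Y a b :: real
  assumes "2 \<le> P" and "Qf X Y = Qf a b" and "\<bar>X\<bar> + \<bar>Y\<bar> \<le> 2 * (\<bar>a\<bar> + \<bar>b\<bar>)"
  shows "\<bar>a\<bar> + \<bar>b\<bar> - 9 / 2 \<le> P * Qf (X - 1 / P) (Y - 1 / P)"
proof -
  have "2 * Qf a b = a\<^sup>2 + b\<^sup>2 + (a - b)\<^sup>2"
    by (simp add: Qf_def power2_eq_square algebra_simps)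
  then have "a\<^sup>2 + b\<^sup>2 \<le> 2 * Qf a b" and "0 \<le> Qf a b"
    using zero_le_power2[of a] zero_le_power2[of b] zero_le_power2[of "a - b"] by linarith+
  then have sq: "a\<^sup>2 + b\<^sup>2 \<le> P * Qf a b"
    using mult_right_mono[OF \<open>2 \<le> P\<close> \<open>0 \<le> Qf a b\<close>] by linarith
  have sum: "X + Y \<le> 2 * (\<bar>a\<bar> + \<bar>b\<bar>)"
    using order_trans[OF add_mono[OF abs_ge_self abs_ge_self] assms(3)] .
  have sq_ge: "3 * \<bar>t\<bar> - 9 / 4 \<le> t\<^sup>2" for t :: real
    using zero_le_power2[of "\<bar>t\<bar> - 3 / 2"] by (simp add: power2_eq_square algebra_simps)
  have "0 < 1 / P"
    using \<open>2 \<le> P\<close> by simp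
  then have "\<bar>a\<bar> + \<bar>b\<bar> - 9 / 2 \<le> P * Qf a b - (X + Y) + 1 / P"
    using sq sum sq_ge[of a] sq_ge[of b] by argo
  also have "\<dots> = P * Qf (X - 1 / P) (Y - 1 / P)"
    using Qf_shift[of P X Y] assms(1,2) by simp
  finally show ?thesis .
qed

definition qweight :: "complex \<Rightarrow> int \<Rightarrow> int \<times> int \<Rightarrow> complex" where
  "qweight \<tau> p v = qpow \<tau> (of_int p * Qf (of_int (fst v) - 1 / of_int p) (of_int (snd v) - 1 / of_int p))"

lemma qweight_weyl_act:
  assumes "p \<noteq> 0"
  shows "qweight \<tau> p (weyl_act w v) =
    qweight \<tau> p v * qpow \<tau> (of_int (fst v + snd v - fst (weyl_act w v) - snd (weyl_act w v)))"
  using assms by (simp add: qweight_def qpow_add Qf_shift Qf_weyl_act algebra_simps)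

lemma norm_qweight_weyl_act_le:
  assumes "2 \<le> p" and "0 \<le> Im \<tau>"
  shows "norm (qweight \<tau> p (weyl_act w v))
    \<le> exp (- 2 * pi * Im \<tau> * (\<bar>of_int (fst v)\<bar> + \<bar>of_int (snd v)\<bar> - 9 / 2))"
proof -
  have "real_of_int (\<bar>fst (weyl_act w v)\<bar> + \<bar>snd (weyl_act w v)\<bar>)
      \<le> of_int (2 * (\<bar>fst v\<bar> + \<bar>snd v\<bar>))"
    by (simp only: of_int_le_iff weyl_act_abs_le)
  then have "\<bar>real_of_int (fst (weyl_act w v))\<bar> + \<bar>real_of_int (snd (weyl_act w v))\<bar>
      \<le> 2 * (\<bar>real_of_int (fst v)\<bar> + \<bar>real_of_int (snd v)\<bar>)"
    by simp
  then have "\<bar>of_int (fst v)\<bar> + \<bar>of_int (snd v)\<bar> - 9 / 2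
      \<le> of_int p * Qf (of_int (fst (weyl_act w v)) - 1 / of_int p) (of_int (snd (weyl_act w v)) - 1 / of_int p)"
    using assms(1) by (intro Qf_shift_lower_bound Qf_weyl_act) simp_all
  then show ?thesis
    using assms(2) by (simp add: qweight_def norm_qpow mult_left_mono)
qed

lemma summable_on_weyl_term:
  assumes "2 \<le> p" and "0 < Im \<tau>"
  shows "(\<lambda>m. of_int (min (fst m) (snd m)) * qweight \<tau> p (weyl_act w (m + r)))
    summable_on {m. 1 \<le> fst m \<and> 1 \<le> snd m}"
proof -
  define c where "c = 2 * pi * Im \<tau>"
  define K where "K = \<bar>real_of_int (fst r)\<bar> + \<bar>real_of_int (snd r)\<bar> + 9 / 2"
  have "0 < c"
    using assms(2) by (simp add: c_def)
  let ?bound = "\<lambda>m. exp (c * K) * (case m of (m1, m2) \<Rightarrow>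
    (of_int m1 * exp (- c * of_int m1)) * (of_int m2 * exp (- c * of_int m2)))"
  have bound_summable: "?bound summable_on {1..} \<times> {1..}"
    using summable_on_of_int_mult_exp[OF \<open>0 < c\<close>]
    by (intro summable_on_cmult_right summable_on_Times_nonneg) auto
  have quadrant: "{m :: int \<times> int. 1 \<le> fst m \<and> 1 \<le> snd m} = {1..} \<times> {1..}"
    by auto
  have bound: "norm (of_int (min (fst m) (snd m)) * qweight \<tau> p (weyl_act w (m + r))) \<le> ?bound m"
    if m_in: "m \<in> {1..} \<times> {1..}" for m
  proof -
    obtain m1 m2 where m: "m = (m1, m2)" "1 \<le> m1" "1 \<le> m2"
      using m_in by (cases m) auto
    have "m1 + m2 - K \<le> \<bar>of_int (fst (m + r))\<bar> + \<bar>of_int (snd (m + r))\<bar> - 9 / 2"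
      unfolding K_def m by (cases r) auto
    then have "exp (- c * (\<bar>of_int (fst (m + r))\<bar> + \<bar>of_int (snd (m + r))\<bar> - 9 / 2))
        \<le> exp (- c * (m1 + m2 - K))"
      using \<open>0 < c\<close> by simp
    with norm_qweight_weyl_act_le[OF assms(1), of \<tau> w "m + r"] assms(2)
    have "norm (qweight \<tau> p (weyl_act w (m + r))) \<le> exp (- c * (m1 + m2 - K))"
      unfolding c_def by (auto intro: order_trans)
    also have "\<dots> = exp (c * K) * (exp (- c * m1) * exp (- c * m2))"
      by (simp add: exp_add[symmetric] algebra_simps)
    finally have weight_le: "norm (qweight \<tau> p (weyl_act w (m + r)))
        \<le> exp (c * K) * (exp (- c * m1) * exp (- c * m2))" .
    have "norm (of_int (min m1 m2) :: complex) \<le> of_int m1 * of_int m2"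
      using m by (simp add: min_def)
    from mult_mono[OF this weight_le]
    have "norm (of_int (min m1 m2) :: complex) * norm (qweight \<tau> p (weyl_act w (m + r)))
        \<le> (of_int m1 * of_int m2) * (exp (c * K) * (exp (- c * m1) * exp (- c * m2)))"
      using m by simp
    then show ?thesis
      by (simp add: m norm_mult algebra_simps)
  qed
  show ?thesis
    unfolding quadrant
    by (rule abs_summable_summable[OF Infinite_Sum.abs_summable_on_comparison_test'[OF bound_summable bound]])
qed

lemma has_sum_weyl_term:
  fixes w :: weyl and r :: "int \<times> int"
  defines "Q \<equiv> {m :: int \<times> int. 1 \<le> fst m \<and> 1 \<le> snd m}"
  assumes "((\<lambda>m. of_int (min (fst m) (snd m)) * qweight \<tau> p (weyl_act (weyl_inv w) (m + r))) has_sum X) Q"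
  shows "((\<lambda>n. qweight \<tau> p n * of_int (monom_div_den (weyl_act w n - (1, 1)) r)) has_sum X) UNIV"
proof -
  let ?g = "\<lambda>k. qweight \<tau> p (weyl_act (weyl_inv w) k)
    * of_int (inv_den (fst k - 1 - fst r) (snd k - 1 - snd r))"
  have "(?g has_sum X) {k. k - r \<in> Q}"
    using assms(2) by (subst has_sum_reindex_bij_witness[where j = "\<lambda>k. k - r" and i = "\<lambda>m. m + r"
        and T = Q and h = "\<lambda>m. of_int (min (fst m) (snd m)) * qweight \<tau> p (weyl_act (weyl_inv w) (m + r))"])
      (auto simp: Q_def inv_den_def min_def)
  then have "(?g has_sum X) UNIV"
    by (subst has_sum_cong_neutral[where T = "{k. k - r \<in> Q}"]) (auto simp: Q_def inv_den_def)
  then show ?thesis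
    by (subst has_sum_reindex_bij_witness[where j = "weyl_act w" and i = "weyl_act (weyl_inv w)"
        and T = UNIV and h = ?g])
      (auto simp: weyl_act_inv_act weyl_act_act_inv monom_div_den_def algebra_simps)
qed

lemma weyl_alternating_sum_qpow:
  fixes a b :: int
  shows "(\<Sum>w\<in>UNIV. of_int (weyl_sign w)
      * qpow \<tau> (of_int (a + b - fst (weyl_act (weyl_inv w) (a, b)) - snd (weyl_act (weyl_inv w) (a, b)))))
    = 1 - qpow \<tau> (2 * of_int a - of_int b) - qpow \<tau> (2 * of_int b - of_int a)
      + qpow \<tau> (3 * of_int a) + qpow \<tau> (3 * of_int b) - qpow \<tau> (2 * of_int a + 2 * of_int b)"
  by (simp add: UNIV_weyl qpow_def algebra_simps)

lemma GG_summand_eq_weyl_sum: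
  fixes p :: int and m r :: "int \<times> int"
  assumes "p \<noteq> 0"
  shows "(let x = of_int (fst m) + of_int (fst r); y = of_int (snd m) + of_int (snd r) in
        of_int (min (fst m) (snd m))
        * qpow \<tau> (of_int p * Qf (x - 1 / of_int p) (y - 1 / of_int p))
        * (1 - qpow \<tau> (2 * x - y) - qpow \<tau> (2 * y - x)
             + qpow \<tau> (3 * x) + qpow \<tau> (3 * y) - qpow \<tau> (2 * x + 2 * y)))
    = (\<Sum>w\<in>UNIV. of_int (weyl_sign w)
         * (of_int (min (fst m) (snd m)) * qweight \<tau> p (weyl_act (weyl_inv w) (m + r))))"
proof -
  obtain a b where ab: "m + r = (a, b)"
    by (cases "m + r")
  then have x: "of_int (fst m) + of_int (fst r) = real_of_int a"
    and y: "of_int (snd m) + of_int (snd r) = real_of_int b"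
    by (auto simp: prod_eq_iff)
  have "(\<Sum>w\<in>UNIV. of_int (weyl_sign w)
         * (of_int (min (fst m) (snd m)) * qweight \<tau> p (weyl_act (weyl_inv w) (a, b))))
    = of_int (min (fst m) (snd m)) * qweight \<tau> p (a, b) * (\<Sum>w\<in>UNIV. of_int (weyl_sign w)
      * qpow \<tau> (of_int (a + b - fst (weyl_act (weyl_inv w) (a, b)) - snd (weyl_act (weyl_inv w) (a, b)))))"
    by (simp only: qweight_weyl_act[OF assms] sum_distrib_left mult_ac fst_conv snd_conv)
  also have "\<dots> = of_int (min (fst m) (snd m)) * qweight \<tau> p (a, b)
      * (1 - qpow \<tau> (2 * of_int a - of_int b) - qpow \<tau> (2 * of_int b - of_int a)
        + qpow \<tau> (3 * of_int a) + qpow \<tau> (3 * of_int b) - qpow \<tau> (2 * of_int a + 2 * of_int b))"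
    by (simp only: weyl_alternating_sum_qpow)
  finally show ?thesis
    by (simp add: ab x y qweight_def Let_def)
qed

theorem proposition3p2:
  fixes p :: int and \<tau> :: complex and r :: "int \<times> int"
  assumes "p \<ge> 2" and "Im \<tau> > 0"
  shows "coeffF p \<tau> r = GG p (of_int (fst r), of_int (snd r)) \<tau>"
proof -
  have p_nonzero: "p \<noteq> 0"
    using assms(1) by simp
  define Q where "Q = {m :: int \<times> int. 1 \<le> fst m \<and> 1 \<le> snd m}"
  define weyl_term where
    "weyl_term w m = of_int (min (fst m) (snd m)) * qweight \<tau> p (weyl_act (weyl_inv w) (m + r))" for w m
  define X where "X w = infsum (weyl_term w) Q" for w
  have weyl_term_has_sum: "(weyl_term w has_sum X w) Q" for w
    unfolding X_def weyl_term_def Q_def by (rule has_sum_infsum[OF summable_on_weyl_term[OF assms]])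
  let ?total = "\<Sum>w\<in>UNIV. of_int (weyl_sign w) * X w"
  have "((\<lambda>n. \<Sum>w\<in>UNIV. of_int (weyl_sign w)
      * (qweight \<tau> p n * of_int (monom_div_den (weyl_act w n - (1, 1)) r))) has_sum ?total) UNIV"
    by (intro has_sum_sum has_sum_cmult_right has_sum_weyl_term
        weyl_term_has_sum[unfolded weyl_term_def Q_def]) simp
  then have "coeffF p \<tau> r = ?total"
    unfolding coeffF_def summandF_eq_weyl_summand weyl_summand_def
    by (intro infsumI) (simp add: qweight_def sum_distrib_right mult_ac)
  moreover have "((\<lambda>m. \<Sum>w\<in>UNIV. of_int (weyl_sign w) * weyl_term w m) has_sum ?total) Q"
    using weyl_term_has_sum by (intro has_sum_sum has_sum_cmult_right) simp_all
  then have "GG p (of_int (fst r), of_int (snd r)) \<tau> = ?total"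
    unfolding GG_def fst_conv snd_conv GG_summand_eq_weyl_sum[OF p_nonzero]
    by (intro infsumI) (simp add: weyl_term_def Q_def)
  ultimately show ?thesis
    by simp
qed

end
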